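(* Let $m\ge3$, $\mu>0$, $c\in\mathbb{R}^m_{\ge0}$ with matrix form $\mathbf{C}\in\mathbb{R}^{L\times R}_{\ge0}$ ($\mathbf{C}_{ij}=c_{(i,j)}$), demands $d=(d_L,d_R)$ with $d_L\in\Delta^L$, $d_R\in\Delta^R$, and $\mathbf{K}=\exp(-\mathbf{C}/\mu)$ entrywise. Let $u\in\mathbb{R}^L_{>0}$, $v\in\mathbb{R}^R_{>0}$, $\mathbf{X}=\mathrm{diag}(u)\mathbf{K}\mathrm{diag}(v)$, and $x\in\mathbb{R}^m_{>0}$ the vectorization $x_{(i,j)}=\mathbf{X}_{ij}$. Suppose that for some $\Delta\ge0$, $$\|\mathbf{X}\mathbf{1}-d_L\|_1+\|\mathbf{X}^\top\mathbf{1}-d_R\|_1\le\Delta.$$ Then $\hat x:=x/\|x\|_1\in\Delta^m$ satisfies $$\langle c,\hat x\rangle+\mu H(\hat x)\le\mathrm{OPT}_\mu(d)+3C\Delta+\mu m^{-30},\qquad C:=2(\|c\|_\infty+33\mu\log m).$$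
   Context: $L,R$ are finite nonempty sets, $m=|L||R|$, and coordinates of $\mathbb{R}^m$ are indexed by pairs $(i,j)\in L\times R$. $\mathbf{B}\in\{0,1\}^{m\times(|L|+|R|)}$ is the unsigned edge-vertex incidence matrix of the complete bipartite graph on $L\cup R$: $\mathbf{B}_{(i,j),v}=1$ iff $v\in\{i,j\}$. $H(x)=\sum_i x_i\log x_i$ ($0\log0=0$, natural log). $\mathrm{OPT}_\mu(d)=\min_{x\in\Delta^m,\ \mathbf{B}^\top x=d}\ \langle c,x\rangle+\mu H(x)$. $\Delta^k$ denotes the probability simplex. *)

theory Defs
  imports "HOL-Analysis.Analysis"
begin

definition negent :: "('i \<Rightarrow> real) \<Rightarrow> 'i set \<Rightarrow> real" where
  "negent x S = (\<Sum>k\<in>S. (if x k = 0 then 0 else x k * ln (x k)))"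

text \<open>Probability prob_simplex over a finite index set S (values outside S irrelevant).\<close>
definition prob_simplex :: "'i set \<Rightarrow> ('i \<Rightarrow> real) set" where
  "prob_simplex S = {x. (\<forall>k\<in>S. 0 \<le> x k) \<and> (\<Sum>k\<in>S. x k) = 1}"

definition ent_obj :: "'a set \<Rightarrow> 'b set \<Rightarrow> ('a \<times> 'b \<Rightarrow> real) \<Rightarrow> real \<Rightarrow> ('a \<times> 'b \<Rightarrow> real) \<Rightarrow> real" where
  "ent_obj L R c \<mu> x = (\<Sum>e\<in>L \<times> R. c e * x e) + \<mu> * negent x (L \<times> R)"

text \<open>B^T x = d for the complete bipartite incidence matrix: row sums = d_L, column sums = d_R.\<close>
definition marginals_eq :: "'a set \<Rightarrow> 'b set \<Rightarrow> ('a \<times> 'b \<Rightarrow> real) \<Rightarrow> ('a \<Rightarrow> real) \<Rightarrow> ('b \<Rightarrow> real) \<Rightarrow> bool" where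
  "marginals_eq L R x dL dR \<longleftrightarrow>
     (\<forall>i\<in>L. (\<Sum>j\<in>R. x (i, j)) = dL i) \<and> (\<forall>j\<in>R. (\<Sum>i\<in>L. x (i, j)) = dR j)"

definition OPT :: "'a set \<Rightarrow> 'b set \<Rightarrow> ('a \<times> 'b \<Rightarrow> real) \<Rightarrow> real \<Rightarrow> ('a \<Rightarrow> real) \<Rightarrow> ('b \<Rightarrow> real) \<Rightarrow> real" where
  "OPT L R c \<mu> dL dR = Inf (ent_obj L R c \<mu> ` {x. x \<in> prob_simplex (L \<times> R) \<and> marginals_eq L R x dL dR})"

end

theory Submission
  imports Defs
begin

text \<open>
  Since \<open>xhat\<close> is a normalised diagonal scaling of \<open>exp (- C / \<mu>)\<close>, it satisfies
  \<open>c + \<mu> log xhat = \<alpha> \<oplus> \<beta>\<close>; integrating the tangent inequality of \<open>t log t\<close> against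
  this potential shows that \<open>xhat\<close> minimises \<open>\<langle>c, x\<rangle> + \<mu> H(x)\<close> among all nonnegative
  matrices with its own marginals \<open>(r, s)\<close>, which are within \<open>2\<Delta>\<close> of \<open>d\<close> in \<open>\<ell>\<^sub>1\<close>.
  Any coupling \<open>y\<close> of \<open>d\<close> is moved to a coupling of \<open>(r, s)\<close> by shrinking rows and
  columns (Altschuler--Weed--Rigollet rounding) and refilling the deficits with a rank-one
  matrix; this transports a mass \<open>\<delta> \<le> 2\<Delta>\<close>, so it changes the cost by at most
  \<open>\<parallel>c\<parallel>\<^sub>\<infinity> \<delta>\<close> and the entropy by at most \<open>\<delta> (1 + log m) - \<delta> log \<delta>\<close>, and
  \<open>-\<delta> log \<delta> \<le> 62 \<delta> log m + m powr -30\<close>.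
\<close>

section \<open>Entropy estimates\<close>

definition xlogx :: "real \<Rightarrow> real" where
  "xlogx t = (if t = 0 then 0 else t * ln t)"

lemma negent_xlogx: "negent x S = (\<Sum>k\<in>S. xlogx (x k))"
  by (simp add: negent_def xlogx_def)

lemma ent_obj_xlogx: "ent_obj L R c \<mu> x = (\<Sum>e\<in>L \<times> R. c e * x e + \<mu> * xlogx (x e))"
  by (simp add: ent_obj_def negent_xlogx sum.distrib sum_distrib_left)

lemma xlogx_superadd:
  assumes "0 \<le> a" "0 \<le> b"
  shows "xlogx a + xlogx b \<le> xlogx (a + b)"
proof (cases "a = 0 \<or> b = 0")
  case True
  then show ?thesis by (auto simp: xlogx_def)
next
  case False
  with assms have "a > 0" "b > 0" by auto
  then have "a * ln a + b * ln b \<le> a * ln (a + b) + b * ln (a + b)"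
    by (intro add_mono mult_left_mono) auto
  with \<open>a > 0\<close> \<open>b > 0\<close> show ?thesis by (simp add: xlogx_def distrib_right)
qed

lemma xlogx_ge_tangent:
  assumes "0 \<le> u" "0 < q"
  shows "u * ln q + u - q \<le> xlogx u"
proof (cases "u = 0")
  case True
  with assms show ?thesis by (simp add: xlogx_def)
next
  case False
  with assms have u: "u > 0" by simp
  have "u * ln (q / u) \<le> u * (q / u - 1)"
    using u assms by (intro mult_left_mono ln_le_minus_one) auto
  with u assms show ?thesis by (simp add: xlogx_def ln_div algebra_simps)
qed

lemma xlogx_add_le:
  assumes "0 \<le> a" "0 \<le> b" "a + b \<le> 1"
  shows "xlogx (a + b) \<le> xlogx a + b"
proof (cases "a = 0")
  case True
  have "ln b \<le> 1" if "b > 0"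
    using ln_le_minus_one[OF that] assms by linarith
  with True assms show ?thesis by (auto simp: xlogx_def)
next
  case False
  with assms have a: "a > 0" by simp
  have "a * ln ((a + b) / a) \<le> a * ((a + b) / a - 1)"
    using a assms by (intro mult_left_mono ln_le_minus_one) auto
  then have "a * ln (a + b) \<le> a * ln a + b"
    using a assms by (simp add: ln_div field_simps)
  moreover have "b * ln (a + b) \<le> 0"
    using a assms by (simp add: mult_nonneg_nonpos)
  ultimately show ?thesis using a assms by (simp add: xlogx_def distrib_right)
qed

lemma sum_xlogx_ge:
  assumes "finite S" "S \<noteq> {}" "\<forall>k\<in>S. 0 \<le> u k" "(\<Sum>k\<in>S. u k) = \<delta>"
  shows "\<delta> * ln \<delta> - \<delta> * ln (card S) \<le> (\<Sum>k\<in>S. xlogx (u k))"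
proof (cases "\<delta> = 0")
  case True
  with assms have "\<forall>k\<in>S. u k = 0" by (simp add: sum_nonneg_eq_0_iff)
  with True show ?thesis by (simp add: xlogx_def)
next
  case False
  have card: "real (card S) > 0" using assms by (simp add: card_gt_0_iff)
  have "\<delta> \<ge> 0" using assms by (metis sum_nonneg)
  with False have "\<delta> > 0" by simp
  define q where "q = \<delta> / card S"
  have "q > 0" using \<open>\<delta> > 0\<close> card by (simp add: q_def)
  have "\<delta> * ln \<delta> - \<delta> * ln (card S) = (\<Sum>k\<in>S. u k * ln q + u k - q)"
    using assms card \<open>\<delta> > 0\<close>
    by (simp add: q_def sum.distrib sum_subtractf sum_distrib_left[symmetric] sum_distrib_right[symmetric] ln_div algebra_simps)
  also have "\<dots> \<le> (\<Sum>k\<in>S. xlogx (u k))"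
    using assms \<open>q > 0\<close> by (intro sum_mono xlogx_ge_tangent) auto
  finally show ?thesis .
qed

lemma neg_xlogx_le_sqrt:
  assumes "0 \<le> \<delta>"
  shows "- (\<delta> * ln \<delta>) \<le> 2 * sqrt \<delta>"
proof (cases "\<delta> = 0")
  case True
  then show ?thesis by simp
next
  case False
  with assms have t: "sqrt \<delta> > 0" by simp
  have "- ln (sqrt \<delta>) \<le> 1 / sqrt \<delta>"
    using ln_le_minus_one[of "1 / sqrt \<delta>"] t by (simp add: ln_div)
  then have "sqrt \<delta> * sqrt \<delta> * (- ln (sqrt \<delta>)) \<le> sqrt \<delta> * sqrt \<delta> * (1 / sqrt \<delta>)"
    using t by (intro mult_left_mono) auto
  moreover have "ln \<delta> = 2 * ln (sqrt \<delta>)"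
    using t by (simp add: ln_sqrt)
  ultimately show ?thesis using assms t by (simp add: algebra_simps real_div_sqrt)
qed

lemma neg_xlogx_le_log_bound:
  fixes m :: real
  assumes "0 \<le> \<delta>" "3 \<le> m"
  shows "- (\<delta> * ln \<delta>) \<le> 62 * \<delta> * ln m + m powr (-30)"
proof (cases "m powr (-62) \<le> \<delta>")
  case True
  have "m > 0" using assms by simp
  have "0 < m powr (-62)"
    using \<open>m > 0\<close> by simp
  then have "ln (m powr (-62)) \<le> ln \<delta>"
    using True by (rule ln_mono[rotated])
  then have "-62 * ln m \<le> ln \<delta>"
    using \<open>m > 0\<close> by (simp add: ln_powr)
  then have "\<delta> * (-62 * ln m) \<le> \<delta> * ln \<delta>"
    using assms(1) by (rule mult_left_mono)
  moreover have "m powr (-30) > 0" using \<open>m > 0\<close> by simp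
  ultimately show ?thesis by linarith
next
  case False
  have m: "m > 0" "ln m > 0" using assms by auto
  have "(m powr (-31))\<^sup>2 = m powr (-62)"
    using m by (simp add: power2_eq_square powr_add[symmetric])
  with False have "sqrt \<delta> < sqrt ((m powr (-31))\<^sup>2)"
    by (intro real_sqrt_less_mono) simp
  then have "sqrt \<delta> < m powr (-31)"
    by simp
  then have "2 * sqrt \<delta> \<le> m * m powr (-31)"
    using assms by (intro mult_mono) auto
  also have "\<dots> = m powr (-30)"
    using m by (simp add: powr_mult_base)
  finally have "- (\<delta> * ln \<delta>) \<le> m powr (-30)"
    using neg_xlogx_le_sqrt[OF assms(1)] by linarith
  moreover have "0 \<le> 62 * \<delta> * ln m"
    using assms(1) m by simp
  ultimately show ?thesis by linarith
qed

lemma sum_xlogx_perturb: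
  assumes "finite S" "S \<noteq> {}"
    and "\<forall>k\<in>S. 0 \<le> p k \<and> 0 \<le> u k \<and> 0 \<le> w k \<and> p k + w k \<le> 1"
    and "(\<Sum>k\<in>S. u k) = \<delta>" "(\<Sum>k\<in>S. w k) = \<delta>"
  shows "(\<Sum>k\<in>S. xlogx (p k + w k)) \<le> (\<Sum>k\<in>S. xlogx (p k + u k)) + \<delta> + \<delta> * ln (card S) - \<delta> * ln \<delta>"
proof -
  have "(\<Sum>k\<in>S. xlogx (p k + w k)) \<le> (\<Sum>k\<in>S. xlogx (p k) + w k)"
    using assms(3) by (intro sum_mono xlogx_add_le) auto
  moreover have "(\<Sum>k\<in>S. xlogx (p k) + xlogx (u k)) \<le> (\<Sum>k\<in>S. xlogx (p k + u k))"
    using assms(3) by (intro sum_mono xlogx_superadd) auto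
  moreover have "\<delta> * ln \<delta> - \<delta> * ln (card S) \<le> (\<Sum>k\<in>S. xlogx (u k))"
    using assms by (intro sum_xlogx_ge) auto
  ultimately show ?thesis
    using assms(5) by (simp add: sum.distrib)
qed

lemma ent_obj_perturb:
  assumes "finite (L \<times> R)" "L \<times> R \<noteq> {}" "\<mu> > 0"
    and "\<forall>k\<in>L \<times> R. 0 \<le> c k \<and> c k \<le> K"
    and "\<forall>k\<in>L \<times> R. 0 \<le> p k \<and> 0 \<le> u k \<and> 0 \<le> w k \<and> p k + w k \<le> 1"
    and "(\<Sum>k\<in>L \<times> R. u k) = \<delta>" "(\<Sum>k\<in>L \<times> R. w k) = \<delta>"
  shows "ent_obj L R c \<mu> (\<lambda>k. p k + w k) \<le> ent_obj L R c \<mu> (\<lambda>k. p k + u k)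
           + K * \<delta> + \<mu> * (\<delta> + \<delta> * ln (card (L \<times> R)) - \<delta> * ln \<delta>)"
proof -
  have "(\<Sum>k\<in>L \<times> R. c k * w k) \<le> (\<Sum>k\<in>L \<times> R. K * w k)"
    using assms(4,5) by (intro sum_mono mult_right_mono) auto
  moreover have "(\<Sum>k\<in>L \<times> R. K * w k) = K * \<delta>"
    using assms(7) by (simp add: sum_distrib_left[symmetric])
  moreover have "0 \<le> (\<Sum>k\<in>L \<times> R. c k * u k)"
    using assms(4,5) by (intro sum_nonneg) auto
  moreover have "\<mu> * (\<Sum>k\<in>L \<times> R. xlogx (p k + w k)) \<le> \<mu> * ((\<Sum>k\<in>L \<times> R. xlogx (p k + u k))
       + \<delta> + \<delta> * ln (card (L \<times> R)) - \<delta> * ln \<delta>)"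
    using assms by (intro mult_left_mono sum_xlogx_perturb) auto
  ultimately show ?thesis
    unfolding ent_obj_def negent_xlogx by (simp add: distrib_left sum.distrib algebra_simps)
qed

section \<open>Gibbs matrices minimise the entropic objective\<close>

lemma sum_potential:
  fixes y :: "'a \<times> 'b \<Rightarrow> 'c::comm_semiring_0"
  shows "(\<Sum>e\<in>L \<times> R. y e * (\<alpha> (fst e) + \<beta> (snd e)))
     = (\<Sum>i\<in>L. \<alpha> i * (\<Sum>j\<in>R. y (i, j))) + (\<Sum>j\<in>R. \<beta> j * (\<Sum>i\<in>L. y (i, j)))"
proof -
  have "(\<Sum>e\<in>L \<times> R. y e * (\<alpha> (fst e) + \<beta> (snd e)))
      = (\<Sum>i\<in>L. \<Sum>j\<in>R. \<alpha> i * y (i, j)) + (\<Sum>i\<in>L. \<Sum>j\<in>R. \<beta> j * y (i, j))"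
    unfolding sum.cartesian_product' sum.distrib[symmetric]
    by (intro sum.cong refl) (simp add: distrib_left mult.commute)
  also have "(\<Sum>i\<in>L. \<Sum>j\<in>R. \<beta> j * y (i, j)) = (\<Sum>j\<in>R. \<Sum>i\<in>L. \<beta> j * y (i, j))"
    by (rule sum.swap)
  finally show ?thesis
    by (simp add: sum_distrib_left)
qed

lemma gibbs_minimizes_ent_obj:
  assumes "\<mu> > 0"
    and gibbs: "\<forall>e\<in>L \<times> R. 0 < x e \<and> c e + \<mu> * ln (x e) = \<alpha> (fst e) + \<beta> (snd e)"
    and "\<forall>e\<in>L \<times> R. 0 \<le> z e"
    and rows: "\<forall>i\<in>L. (\<Sum>j\<in>R. z (i, j)) = (\<Sum>j\<in>R. x (i, j))"
    and cols: "\<forall>j\<in>R. (\<Sum>i\<in>L. z (i, j)) = (\<Sum>i\<in>L. x (i, j))"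
  shows "ent_obj L R c \<mu> x \<le> ent_obj L R c \<mu> z"
proof -
  have tangent: "z e * (\<alpha> (fst e) + \<beta> (snd e)) + \<mu> * (z e - x e) \<le> c e * z e + \<mu> * xlogx (z e)"
    if "e \<in> L \<times> R" for e
  proof -
    have "\<alpha> (fst e) + \<beta> (snd e) = c e + \<mu> * ln (x e)"
      using gibbs that by auto
    moreover have "\<mu> * (z e * ln (x e) + z e - x e) \<le> \<mu> * xlogx (z e)"
      using that assms by (intro mult_left_mono xlogx_ge_tangent) auto
    ultimately show ?thesis
      by (simp add: algebra_simps)
  qed
  have mass: "(\<Sum>e\<in>L \<times> R. z e) = (\<Sum>e\<in>L \<times> R. x e)"
    using rows by (simp add: sum.cartesian_product')
  have "ent_obj L R c \<mu> x = (\<Sum>e\<in>L \<times> R. x e * (c e + \<mu> * ln (x e)))"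
    unfolding ent_obj_xlogx using gibbs
    by (intro sum.cong) (auto simp: xlogx_def algebra_simps)
  also have "\<dots> = (\<Sum>e\<in>L \<times> R. x e * (\<alpha> (fst e) + \<beta> (snd e)))"
    using gibbs by (intro sum.cong) auto
  also have "\<dots> = (\<Sum>e\<in>L \<times> R. z e * (\<alpha> (fst e) + \<beta> (snd e)))"
    using rows cols by (simp add: sum_potential)
  also have "\<dots> = (\<Sum>e\<in>L \<times> R. z e * (\<alpha> (fst e) + \<beta> (snd e)) + \<mu> * (z e - x e))"
    using mass by (simp add: sum.distrib sum_subtractf sum_distrib_left[symmetric])
  also have "\<dots> \<le> ent_obj L R c \<mu> z"
    unfolding ent_obj_xlogx using tangent by (rule sum_mono)
  finally show ?thesis .
qed

section \<open>Rounding a coupling onto prescribed marginals\<close>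

definition scale_down ::
    "('a \<times> 'b \<Rightarrow> real) \<Rightarrow> ('a \<Rightarrow> real) \<Rightarrow> ('b \<Rightarrow> real) \<Rightarrow> ('a \<Rightarrow> real) \<Rightarrow> ('b \<Rightarrow> real) \<Rightarrow> 'a \<times> 'b \<Rightarrow> real"
  where "scale_down y dL dR r s =
    (\<lambda>(i, j). min (y (i, j)) (min (y (i, j) * (r i / dL i)) (y (i, j) * (s j / dR j))))"

lemma sum_le_scaled:
  fixes y q :: "'i \<Rightarrow> real"
  assumes "\<forall>k\<in>A. 0 \<le> y k" "(\<Sum>k\<in>A. y k) = d" "0 \<le> r"
    and "\<forall>k\<in>A. q k \<le> y k \<and> q k \<le> y k * (r / d)"
  shows "(\<Sum>k\<in>A. q k) \<le> r"
proof (cases "d = 0")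
  case True
  have "(\<Sum>k\<in>A. q k) \<le> (\<Sum>k\<in>A. y k)"
    using assms(4) by (intro sum_mono) auto
  with True assms(2,3) show ?thesis by simp
next
  case False
  have "(\<Sum>k\<in>A. q k) \<le> (\<Sum>k\<in>A. y k * (r / d))"
    using assms(4) by (intro sum_mono) auto
  also have "\<dots> = r"
    using False assms(2) by (simp add: sum_divide_distrib[symmetric] sum_distrib_right[symmetric])
  finally show ?thesis .
qed

lemma scale_down_marginals_le:
  assumes "\<forall>e\<in>L \<times> R. 0 \<le> y e" "marginals_eq L R y dL dR" "\<forall>i\<in>L. 0 \<le> r i" "\<forall>j\<in>R. 0 \<le> s j"
  shows "\<forall>i\<in>L. (\<Sum>j\<in>R. scale_down y dL dR r s (i, j)) \<le> r i"
    and "\<forall>j\<in>R. (\<Sum>i\<in>L. scale_down y dL dR r s (i, j)) \<le> s j"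
proof -
  show "\<forall>i\<in>L. (\<Sum>j\<in>R. scale_down y dL dR r s (i, j)) \<le> r i"
  proof
    fix i assume "i \<in> L"
    with assms show "(\<Sum>j\<in>R. scale_down y dL dR r s (i, j)) \<le> r i"
      by (intro sum_le_scaled[where y = "\<lambda>j. y (i, j)" and d = "dL i"])
        (auto simp: marginals_eq_def scale_down_def)
  qed
  show "\<forall>j\<in>R. (\<Sum>i\<in>L. scale_down y dL dR r s (i, j)) \<le> s j"
  proof
    fix j assume "j \<in> R"
    with assms show "(\<Sum>i\<in>L. scale_down y dL dR r s (i, j)) \<le> s j"
      by (intro sum_le_scaled[where y = "\<lambda>i. y (i, j)" and d = "dR j"])
        (auto simp: marginals_eq_def scale_down_def)
  qed
qed

lemma diff_min_scaled_le:
  fixes y a b :: real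
  assumes "0 \<le> y"
  shows "y - min y (min (y * a) (y * b)) \<le> y * (max 0 (1 - a) + max 0 (1 - b))"
proof -
  have "y * (1 - a) \<le> y * max 0 (1 - a)" "y * (1 - b) \<le> y * max 0 (1 - b)"
    using assms by (auto intro: mult_left_mono)
  moreover have "0 \<le> y * max 0 (1 - a)" "0 \<le> y * max 0 (1 - b)"
    using assms by simp_all
  ultimately show ?thesis
    unfolding min_def by (simp add: algebra_simps)
qed

lemma max_0_one_minus_div_mult_le:
  fixes d r :: real
  shows "max 0 (1 - r / d) * d \<le> \<bar>d - r\<bar>"
  by (cases d "0::real" rule: linorder_cases) (auto simp: max_def field_simps)

lemma scale_down_mass_loss:
  assumes "\<forall>e\<in>L \<times> R. 0 \<le> y e" "marginals_eq L R y dL dR"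
  shows "(\<Sum>e\<in>L \<times> R. y e - scale_down y dL dR r s e)
           \<le> (\<Sum>i\<in>L. \<bar>dL i - r i\<bar>) + (\<Sum>j\<in>R. \<bar>dR j - s j\<bar>)"
proof -
  define a where "a i = max 0 (1 - r i / dL i)" for i
  define b where "b j = max 0 (1 - s j / dR j)" for j
  have "(\<Sum>e\<in>L \<times> R. y e - scale_down y dL dR r s e) \<le> (\<Sum>e\<in>L \<times> R. y e * (a (fst e) + b (snd e)))"
  proof (rule sum_mono)
    fix e assume e: "e \<in> L \<times> R"
    obtain i j where "e = (i, j)" by fastforce
    with e assms(1) diff_min_scaled_le[of "y (i, j)" "r i / dL i" "s j / dR j"]
    show "y e - scale_down y dL dR r s e \<le> y e * (a (fst e) + b (snd e))"
      by (simp add: scale_down_def a_def b_def)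
  qed
  also have "\<dots> = (\<Sum>i\<in>L. a i * dL i) + (\<Sum>j\<in>R. b j * dR j)"
    using assms(2) by (simp add: sum_potential marginals_eq_def)
  also have "\<dots> \<le> (\<Sum>i\<in>L. \<bar>dL i - r i\<bar>) + (\<Sum>j\<in>R. \<bar>dR j - s j\<bar>)"
    unfolding a_def b_def by (intro add_mono sum_mono max_0_one_minus_div_mult_le)
  finally show ?thesis .
qed

lemma marginal_completion:
  assumes "finite L" "finite R" "\<forall>e\<in>L \<times> R. 0 \<le> p e"
    and rows: "\<forall>i\<in>L. (\<Sum>j\<in>R. p (i, j)) \<le> r i"
    and cols: "\<forall>j\<in>R. (\<Sum>i\<in>L. p (i, j)) \<le> s j"
    and "(\<Sum>i\<in>L. r i) = (\<Sum>j\<in>R. s j)"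
  obtains w where "\<forall>e\<in>L \<times> R. 0 \<le> w e"
    and "(\<Sum>e\<in>L \<times> R. w e) = (\<Sum>i\<in>L. r i) - (\<Sum>e\<in>L \<times> R. p e)"
    and "marginals_eq L R (\<lambda>e. p e + w e) r s"
proof -
  define \<delta> where "\<delta> = (\<Sum>i\<in>L. r i) - (\<Sum>e\<in>L \<times> R. p e)"
  define a where "a i = r i - (\<Sum>j\<in>R. p (i, j))" for i
  define b where "b j = s j - (\<Sum>i\<in>L. p (i, j))" for j
  define w where "w = (\<lambda>(i, j). a i * b j / \<delta>)"
  have a0: "\<forall>i\<in>L. 0 \<le> a i" and b0: "\<forall>j\<in>R. 0 \<le> b j"
    using rows cols by (simp_all add: a_def b_def)
  have sa: "(\<Sum>i\<in>L. a i) = \<delta>"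
    by (simp add: a_def \<delta>_def sum_subtractf sum.cartesian_product')
  have sb: "(\<Sum>j\<in>R. b j) = \<delta>"
    using assms(6) sum.swap[of "\<lambda>i j. p (i, j)" R L]
    by (simp add: b_def \<delta>_def sum_subtractf sum.cartesian_product')
  have "0 \<le> \<delta>"
    using a0 sa sum_nonneg by metis
  have row_w: "(\<Sum>j\<in>R. w (i, j)) = a i" if "i \<in> L" for i
  proof (cases "\<delta> = 0")
    case True
    with assms(1) a0 sa that have "a i = 0" by (simp add: sum_nonneg_eq_0_iff)
    then show ?thesis by (simp add: w_def)
  next
    case False
    with sb show ?thesis
      by (simp add: w_def sum_divide_distrib[symmetric] sum_distrib_left[symmetric])
  qed
  have col_w: "(\<Sum>i\<in>L. w (i, j)) = b j" if "j \<in> R" for j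
  proof (cases "\<delta> = 0")
    case True
    with assms(2) b0 sb that have "b j = 0" by (simp add: sum_nonneg_eq_0_iff)
    then show ?thesis by (simp add: w_def)
  next
    case False
    with sa show ?thesis
      by (simp add: w_def sum_divide_distrib[symmetric] sum_distrib_right[symmetric])
  qed
  show ?thesis
  proof
    show "\<forall>e\<in>L \<times> R. 0 \<le> w e"
      using a0 b0 \<open>0 \<le> \<delta>\<close> by (auto simp: w_def)
    show "(\<Sum>e\<in>L \<times> R. w e) = (\<Sum>i\<in>L. r i) - (\<Sum>e\<in>L \<times> R. p e)"
      using row_w sa by (simp add: sum.cartesian_product' \<delta>_def)
    show "marginals_eq L R (\<lambda>e. p e + w e) r s"
      using row_w col_w by (simp add: marginals_eq_def sum.distrib a_def b_def)
  qed
qed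

lemma round_to_marginals:
  assumes "finite L" "finite R"
    and "\<forall>e\<in>L \<times> R. 0 \<le> y e" "(\<Sum>e\<in>L \<times> R. y e) = 1" "marginals_eq L R y dL dR"
    and "\<forall>i\<in>L. 0 \<le> r i" "(\<Sum>i\<in>L. r i) = 1" "\<forall>j\<in>R. 0 \<le> s j" "(\<Sum>j\<in>R. s j) = 1"
  obtains p u w \<delta> where "\<forall>e\<in>L \<times> R. 0 \<le> p e \<and> 0 \<le> u e \<and> 0 \<le> w e \<and> y e = p e + u e"
    and "(\<Sum>e\<in>L \<times> R. u e) = \<delta>" "(\<Sum>e\<in>L \<times> R. w e) = \<delta>"
    and "marginals_eq L R (\<lambda>e. p e + w e) r s"
    and "\<delta> \<le> (\<Sum>i\<in>L. \<bar>dL i - r i\<bar>) + (\<Sum>j\<in>R. \<bar>dR j - s j\<bar>)"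
proof -
  define p where "p = scale_down y dL dR r s"
  have "\<forall>i\<in>L. 0 \<le> dL i" "\<forall>j\<in>R. 0 \<le> dR j"
    using assms(3,5) unfolding marginals_eq_def by (metis SigmaI sum_nonneg)+
  then have p: "\<forall>e\<in>L \<times> R. 0 \<le> p e \<and> p e \<le> y e"
    using assms(3,6,8) by (auto simp: p_def scale_down_def)
  obtain w where w: "\<forall>e\<in>L \<times> R. 0 \<le> w e" "(\<Sum>e\<in>L \<times> R. w e) = 1 - (\<Sum>e\<in>L \<times> R. p e)"
    and marg: "marginals_eq L R (\<lambda>e. p e + w e) r s"
    using marginal_completion[OF assms(1,2), of p r s] scale_down_marginals_le[OF assms(3,5,6,8)] p
    unfolding p_def assms(7,9) by auto
  show ?thesis
  proof
    show "\<forall>e\<in>L \<times> R. 0 \<le> p e \<and> 0 \<le> y e - p e \<and> 0 \<le> w e \<and> y e = p e + (y e - p e)"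
      using p w by auto
    show "(\<Sum>e\<in>L \<times> R. w e) = (\<Sum>e\<in>L \<times> R. y e - p e)"
      using w assms(4) by (simp add: sum_subtractf)
    show "(\<Sum>e\<in>L \<times> R. y e - p e) \<le> (\<Sum>i\<in>L. \<bar>dL i - r i\<bar>) + (\<Sum>j\<in>R. \<bar>dR j - s j\<bar>)"
      unfolding p_def using assms(3,5) by (rule scale_down_mass_loss)
  qed (use marg in auto)
qed

lemma l1_dist_normalize_le:
  fixes a d :: "'i \<Rightarrow> real"
  assumes "\<forall>k\<in>A. 0 \<le> a k" "(\<Sum>k\<in>A. d k) = 1" "0 < (\<Sum>k\<in>A. a k)"
  shows "(\<Sum>k\<in>A. \<bar>d k - a k / (\<Sum>k\<in>A. a k)\<bar>) \<le> 2 * (\<Sum>k\<in>A. \<bar>a k - d k\<bar>)"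
proof -
  define Z where "Z = (\<Sum>k\<in>A. a k)"
  have "\<bar>Z - 1\<bar> = \<bar>\<Sum>k\<in>A. a k - d k\<bar>"
    using assms(2) by (simp add: Z_def sum_subtractf)
  also have "\<dots> \<le> (\<Sum>k\<in>A. \<bar>a k - d k\<bar>)"
    by (rule sum_abs)
  finally have Z1: "\<bar>Z - 1\<bar> \<le> (\<Sum>k\<in>A. \<bar>a k - d k\<bar>)" .
  have "(\<Sum>k\<in>A. \<bar>d k - a k / Z\<bar>) \<le> (\<Sum>k\<in>A. \<bar>a k - d k\<bar> + a k * \<bar>1 - 1 / Z\<bar>)"
  proof (rule sum_mono)
    fix k assume "k \<in> A"
    have "a k - a k / Z = a k * (1 - 1 / Z)"
      by (simp add: right_diff_distrib)
    with \<open>k \<in> A\<close> have "\<bar>a k - a k / Z\<bar> = a k * \<bar>1 - 1 / Z\<bar>"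
      using assms(1) by (simp add: abs_mult)
    then show "\<bar>d k - a k / Z\<bar> \<le> \<bar>a k - d k\<bar> + a k * \<bar>1 - 1 / Z\<bar>"
      by linarith
  qed
  also have "\<dots> = (\<Sum>k\<in>A. \<bar>a k - d k\<bar>) + Z * \<bar>1 - 1 / Z\<bar>"
    by (simp add: sum.distrib Z_def sum_distrib_right[symmetric])
  also have "Z * \<bar>1 - 1 / Z\<bar> = \<bar>Z * (1 - 1 / Z)\<bar>"
    using assms(3) by (simp add: Z_def abs_mult)
  also have "Z * (1 - 1 / Z) = Z - 1"
    using assms(3) by (simp add: Z_def field_simps)
  finally show ?thesis
    using Z1 by (simp add: Z_def)
qed

lemma normalized_marginal_dist_le:
  fixes X :: "'a \<times> 'b \<Rightarrow> real"
  assumes "\<forall>e\<in>L \<times> R. 0 \<le> X e" "0 < (\<Sum>e\<in>L \<times> R. X e)"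
    and "(\<Sum>i\<in>L. dL i) = 1" "(\<Sum>j\<in>R. dR j) = 1"
  shows "(\<Sum>i\<in>L. \<bar>dL i - (\<Sum>j\<in>R. X (i, j) / (\<Sum>e\<in>L \<times> R. X e))\<bar>)
           + (\<Sum>j\<in>R. \<bar>dR j - (\<Sum>i\<in>L. X (i, j) / (\<Sum>e\<in>L \<times> R. X e))\<bar>)
         \<le> 2 * ((\<Sum>i\<in>L. \<bar>(\<Sum>j\<in>R. X (i, j)) - dL i\<bar>) + (\<Sum>j\<in>R. \<bar>(\<Sum>i\<in>L. X (i, j)) - dR j\<bar>))"
proof -
  have rows: "(\<Sum>e\<in>L \<times> R. X e) = (\<Sum>i\<in>L. \<Sum>j\<in>R. X (i, j))"
    by (rule sum.cartesian_product')
  have cols: "(\<Sum>e\<in>L \<times> R. X e) = (\<Sum>j\<in>R. \<Sum>i\<in>L. X (i, j))"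
    by (simp add: sum.cartesian_product' sum.swap[of _ R L])
  have "(\<Sum>i\<in>L. \<bar>dL i - (\<Sum>j\<in>R. X (i, j)) / (\<Sum>e\<in>L \<times> R. X e)\<bar>) \<le> 2 * (\<Sum>i\<in>L. \<bar>(\<Sum>j\<in>R. X (i, j)) - dL i\<bar>)"
    unfolding rows using assms(1-3) rows by (intro l1_dist_normalize_le) (auto intro: sum_nonneg)
  moreover have "(\<Sum>j\<in>R. \<bar>dR j - (\<Sum>i\<in>L. X (i, j)) / (\<Sum>e\<in>L \<times> R. X e)\<bar>) \<le> 2 * (\<Sum>j\<in>R. \<bar>(\<Sum>i\<in>L. X (i, j)) - dR j\<bar>)"
    unfolding cols using assms(1,2,4) cols by (intro l1_dist_normalize_le) (auto intro: sum_nonneg)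
  ultimately show ?thesis
    by (simp add: sum_divide_distrib)
qed

lemma scaled_kernel_gibbs:
  fixes u :: "'a \<Rightarrow> real" and v :: "'b \<Rightarrow> real"
  assumes "\<mu> > 0" "\<forall>i\<in>L. 0 < u i" "\<forall>j\<in>R. 0 < v j" "0 < Z"
  shows "\<forall>e\<in>L \<times> R. 0 < u (fst e) * exp (- c e / \<mu>) * v (snd e) / Z \<and>
           c e + \<mu> * ln (u (fst e) * exp (- c e / \<mu>) * v (snd e) / Z)
             = (\<mu> * ln (u (fst e)) - \<mu> * ln Z) + \<mu> * ln (v (snd e))"
  using assms by (auto simp: ln_div ln_mult algebra_simps)

lemma le_Max_abs_image:
  fixes f :: "'i \<Rightarrow> 'r::linordered_idom"
  assumes "finite A" "a \<in> A"
  shows "f a \<le> Max ((\<lambda>e. \<bar>f e\<bar>) ` A)"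
  using assms by (intro order_trans[OF abs_ge_self Max_ge]) auto

lemma rounding_error_le:
  fixes K \<mu> \<delta> \<Delta> n :: real
  assumes "0 \<le> K" "0 < \<mu>" "0 \<le> \<delta>" "\<delta> \<le> 2 * \<Delta>" "3 \<le> n"
  shows "K * \<delta> + \<mu> * (\<delta> + \<delta> * ln n - \<delta> * ln \<delta>) \<le> 6 * (K + 33 * \<mu> * ln n) * \<Delta> + \<mu> * n powr (-30)"
proof -
  have "1 \<le> ln n"
    using ln3_gt_1 ln_mono[OF assms(5)] by simp
  then have "\<delta> \<le> \<delta> * ln n" "\<delta> * ln n \<le> 2 * \<Delta> * ln n" "0 \<le> \<Delta> * ln n"
    using mult_left_mono[OF \<open>1 \<le> ln n\<close> assms(3)] mult_right_mono[OF assms(4), of "ln n"] assms(3,4)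
    by simp_all
  then have "\<delta> + \<delta> * ln n - \<delta> * ln \<delta> \<le> 198 * \<Delta> * ln n + n powr (-30)"
    using neg_xlogx_le_log_bound[OF assms(3,5)] by linarith
  then have "\<mu> * (\<delta> + \<delta> * ln n - \<delta> * ln \<delta>) \<le> \<mu> * (198 * \<Delta> * ln n + n powr (-30))"
    using assms(2) by (intro mult_left_mono) auto
  moreover have "K * \<delta> \<le> K * (2 * \<Delta>)" "0 \<le> K * \<Delta>"
    using assms(1,3,4) by (auto intro: mult_left_mono)
  ultimately show ?thesis
    by (simp add: algebra_simps)
qed

lemma ent_obj_gibbs_le_feasible:
  assumes "finite L" "finite R" "L \<noteq> {}" "R \<noteq> {}" "3 \<le> card (L \<times> R)" "\<mu> > 0"
    and cost: "\<forall>e\<in>L \<times> R. 0 \<le> c e \<and> c e \<le> K"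
    and gibbs: "\<forall>e\<in>L \<times> R. 0 < x e \<and> c e + \<mu> * ln (x e) = \<alpha> (fst e) + \<beta> (snd e)"
    and x1: "(\<Sum>e\<in>L \<times> R. x e) = 1"
    and y: "\<forall>e\<in>L \<times> R. 0 \<le> y e" "(\<Sum>e\<in>L \<times> R. y e) = 1" "marginals_eq L R y dL dR"
    and dist: "(\<Sum>i\<in>L. \<bar>dL i - (\<Sum>j\<in>R. x (i, j))\<bar>) + (\<Sum>j\<in>R. \<bar>dR j - (\<Sum>i\<in>L. x (i, j))\<bar>) \<le> 2 * \<Delta>"
  shows "ent_obj L R c \<mu> x
           \<le> ent_obj L R c \<mu> y + 6 * (K + 33 * \<mu> * ln (card (L \<times> R))) * \<Delta>
              + \<mu> * card (L \<times> R) powr (-30)"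
proof -
  let ?n = "card (L \<times> R)"
  have r: "\<forall>i\<in>L. 0 \<le> (\<Sum>j\<in>R. x (i, j))" "(\<Sum>i\<in>L. \<Sum>j\<in>R. x (i, j)) = 1"
    using gibbs x1 by (auto simp: sum.cartesian_product' intro: sum_nonneg less_imp_le)
  have s: "\<forall>j\<in>R. 0 \<le> (\<Sum>i\<in>L. x (i, j))" "(\<Sum>j\<in>R. \<Sum>i\<in>L. x (i, j)) = 1"
    using gibbs x1 by (auto simp: sum.cartesian_product' sum.swap[of _ R L] intro: sum_nonneg less_imp_le)
  obtain p u w \<delta> where puw: "\<forall>e\<in>L \<times> R. 0 \<le> p e \<and> 0 \<le> u e \<and> 0 \<le> w e \<and> y e = p e + u e"
    and u: "(\<Sum>e\<in>L \<times> R. u e) = \<delta>" and w: "(\<Sum>e\<in>L \<times> R. w e) = \<delta>"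
    and marg: "marginals_eq L R (\<lambda>e. p e + w e) (\<lambda>i. \<Sum>j\<in>R. x (i, j)) (\<lambda>j. \<Sum>i\<in>L. x (i, j))"
    and \<delta>: "\<delta> \<le> (\<Sum>i\<in>L. \<bar>dL i - (\<Sum>j\<in>R. x (i, j))\<bar>) + (\<Sum>j\<in>R. \<bar>dR j - (\<Sum>i\<in>L. x (i, j))\<bar>)"
    using round_to_marginals[OF assms(1,2) y r s] by blast
  have "0 \<le> \<delta>"
    using puw u by (metis sum_nonneg)
  have total: "(\<Sum>e\<in>L \<times> R. p e + w e) = 1"
    using marg r(2) by (simp add: marginals_eq_def sum.cartesian_product')
  have le1: "p e + w e \<le> 1" if "e \<in> L \<times> R" for e
    using member_le_sum[of e "L \<times> R" "\<lambda>e. p e + w e"] puw that assms(1,2) total by auto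
  have err: "K * \<delta> + \<mu> * (\<delta> + \<delta> * ln ?n - \<delta> * ln \<delta>)
      \<le> 6 * (K + 33 * \<mu> * ln ?n) * \<Delta> + \<mu> * ?n powr (-30)"
    using assms(3-6) cost \<open>0 \<le> \<delta>\<close> \<delta> dist by (intro rounding_error_le) force+
  have "ent_obj L R c \<mu> x \<le> ent_obj L R c \<mu> (\<lambda>e. p e + w e)"
    using assms(6) gibbs puw marg by (intro gibbs_minimizes_ent_obj) (auto simp: marginals_eq_def)
  also have "\<dots> \<le> ent_obj L R c \<mu> (\<lambda>e. p e + u e) + K * \<delta> + \<mu> * (\<delta> + \<delta> * ln ?n - \<delta> * ln \<delta>)"
    using assms(1-4,6) cost puw le1 u w by (intro ent_obj_perturb) auto
  also have "ent_obj L R c \<mu> (\<lambda>e. p e + u e) = ent_obj L R c \<mu> y"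
    unfolding ent_obj_xlogx using puw by (intro sum.cong) auto
  finally show ?thesis
    using err by linarith
qed

lemma OPT_greatest:
  assumes "dL \<in> prob_simplex L" "dR \<in> prob_simplex R"
    and "\<And>y. y \<in> prob_simplex (L \<times> R) \<Longrightarrow> marginals_eq L R y dL dR \<Longrightarrow> a \<le> ent_obj L R c \<mu> y"
  shows "a \<le> OPT L R c \<mu> dL dR"
proof -
  let ?y = "\<lambda>e. dL (fst e) * dR (snd e)"
  have "?y \<in> prob_simplex (L \<times> R)" "marginals_eq L R ?y dL dR"
    using assms(1,2)
    by (auto simp: prob_simplex_def marginals_eq_def sum.cartesian_product'
        sum_distrib_left[symmetric] sum_distrib_right[symmetric])
  then show ?thesis
    unfolding OPT_def using assms(3) by (intro cInf_greatest) auto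
qed

lemma ent_obj_gibbs_le_OPT:
  assumes "finite L" "finite R" "L \<noteq> {}" "R \<noteq> {}" "3 \<le> card (L \<times> R)" "\<mu> > 0"
    and "\<forall>e\<in>L \<times> R. 0 \<le> c e \<and> c e \<le> K"
    and "\<forall>e\<in>L \<times> R. 0 < x e \<and> c e + \<mu> * ln (x e) = \<alpha> (fst e) + \<beta> (snd e)"
    and "(\<Sum>e\<in>L \<times> R. x e) = 1"
    and "dL \<in> prob_simplex L" "dR \<in> prob_simplex R"
    and "(\<Sum>i\<in>L. \<bar>dL i - (\<Sum>j\<in>R. x (i, j))\<bar>) + (\<Sum>j\<in>R. \<bar>dR j - (\<Sum>i\<in>L. x (i, j))\<bar>) \<le> 2 * \<Delta>"
  shows "ent_obj L R c \<mu> x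
           \<le> OPT L R c \<mu> dL dR + 6 * (K + 33 * \<mu> * ln (card (L \<times> R))) * \<Delta>
              + \<mu> * card (L \<times> R) powr (-30)"
proof -
  have "ent_obj L R c \<mu> x - (6 * (K + 33 * \<mu> * ln (card (L \<times> R))) * \<Delta> + \<mu> * card (L \<times> R) powr (-30))
      \<le> OPT L R c \<mu> dL dR"
  proof (rule OPT_greatest[OF assms(10,11)])
    fix y assume "y \<in> prob_simplex (L \<times> R)" "marginals_eq L R y dL dR"
    with ent_obj_gibbs_le_feasible[OF assms(1-9) _ _ _ assms(12)]
    show "ent_obj L R c \<mu> x - (6 * (K + 33 * \<mu> * ln (card (L \<times> R))) * \<Delta> + \<mu> * card (L \<times> R) powr (-30))
        \<le> ent_obj L R c \<mu> y"
      by (force simp: prob_simplex_def)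
  qed
  then show ?thesis
    by simp
qed

theorem mainTheorem14:
  fixes L :: "'a set" and R :: "'b set"
    and c :: "'a \<times> 'b \<Rightarrow> real" and \<mu> \<Delta> :: real
    and dL :: "'a \<Rightarrow> real" and dR :: "'b \<Rightarrow> real"
    and u :: "'a \<Rightarrow> real" and v :: "'b \<Rightarrow> real"
  defines "m \<equiv> card L * card R"
  defines "X \<equiv> (\<lambda>(i, j). u i * exp (- c (i, j) / \<mu>) * v j)"
  defines "xhat \<equiv> (\<lambda>e. X e / (\<Sum>e'\<in>L \<times> R. X e'))"
  defines "Cc \<equiv> 2 * (Max ((\<lambda>e. \<bar>c e\<bar>) ` (L \<times> R)) + 33 * \<mu> * ln (real m))"
  assumes "finite L" "finite R" "L \<noteq> {}" "R \<noteq> {}"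
    and "m \<ge> 3"
    and "\<mu> > 0"
    and "\<forall>e\<in>L \<times> R. c e \<ge> 0"
    and "dL \<in> prob_simplex L" "dR \<in> prob_simplex R"
    and "\<forall>i\<in>L. u i > 0" "\<forall>j\<in>R. v j > 0"
    and "\<Delta> \<ge> 0"
    and "(\<Sum>i\<in>L. \<bar>(\<Sum>j\<in>R. X (i, j)) - dL i\<bar>) + (\<Sum>j\<in>R. \<bar>(\<Sum>i\<in>L. X (i, j)) - dR j\<bar>) \<le> \<Delta>"
  shows "xhat \<in> prob_simplex (L \<times> R) \<and>
         ent_obj L R c \<mu> xhat \<le> OPT L R c \<mu> dL dR + 3 * Cc * \<Delta> + \<mu> * real m powr (-30)"
proof -
  define Z where "Z = (\<Sum>e\<in>L \<times> R. X e)"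
  define K where "K = Max ((\<lambda>e. \<bar>c e\<bar>) ` (L \<times> R))"
  have X_pos: "\<forall>e\<in>L \<times> R. 0 < X e"
    using assms(14,15) by (auto simp: X_def)
  then have "0 < Z"
    unfolding Z_def using assms(5-8) by (intro sum_pos) auto
  have xhat: "xhat = (\<lambda>e. u (fst e) * exp (- c e / \<mu>) * v (snd e) / Z)"
    by (simp add: xhat_def Z_def X_def case_prod_beta)
  have gibbs: "\<forall>e\<in>L \<times> R. 0 < xhat e \<and>
      c e + \<mu> * ln (xhat e) = (\<mu> * ln (u (fst e)) - \<mu> * ln Z) + \<mu> * ln (v (snd e))"
    unfolding xhat using assms(10,14,15) \<open>0 < Z\<close> by (rule scaled_kernel_gibbs)
  have xhat_sum: "(\<Sum>e\<in>L \<times> R. xhat e) = 1"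
    using \<open>0 < Z\<close> by (simp add: xhat_def Z_def[symmetric] sum_divide_distrib[symmetric])
  have cost: "\<forall>e\<in>L \<times> R. 0 \<le> c e \<and> c e \<le> K"
    using assms(5,6,11) by (auto simp: K_def intro: le_Max_abs_image)
  have dist: "(\<Sum>i\<in>L. \<bar>dL i - (\<Sum>j\<in>R. xhat (i, j))\<bar>) + (\<Sum>j\<in>R. \<bar>dR j - (\<Sum>i\<in>L. xhat (i, j))\<bar>) \<le> 2 * \<Delta>"
    using normalized_marginal_dist_le[of L R X dL dR] X_pos \<open>0 < Z\<close> assms(12,13,17)
    by (force simp: xhat_def Z_def prob_simplex_def)
  have "ent_obj L R c \<mu> xhat \<le> OPT L R c \<mu> dL dR
      + 6 * (K + 33 * \<mu> * ln (card (L \<times> R))) * \<Delta> + \<mu> * card (L \<times> R) powr (-30)"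
    using assms(9) by (intro ent_obj_gibbs_le_OPT[OF assms(5-8) _ assms(10) cost gibbs xhat_sum assms(12,13) dist])
      (simp add: m_def card_cartesian_product)
  with gibbs xhat_sum show ?thesis
    by (auto simp: prob_simplex_def less_imp_le Cc_def K_def m_def card_cartesian_product)
qed

end
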